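(* Let $T_l$ be a $2m$ deck-shuffler IET. Then $H_l$ is non-decreasing and has only finitely many plateaus, i.e. there are only finitely many $z\in[0,1)$ for which $H_l^{-1}(\{z\})$ is an interval of positive length.
   Context: A $2m$ deck-shuffler IET $T_l$ is the map $[0,1)\to[0,1)$ determined by a length vector $l$ giving a partition of $[0,1)$ into consecutive left-closed right-open intervals $A_1<\dots<A_m<B_1<\dots<B_m$ of positive lengths, with $T_l(x)=x+|B_1|+\dots+|B_i|$ for $x\in A_i$ and $T_l(x)=x-|A_i|-\dots-|A_m|$ for $x\in B_i$. $B=B_1\cup\dots\cup B_m$ and $H_l(x)=\sum_{n=0}^\infty \chi_B(T_l^n x)/2^{n+1}$. *)

theory Defs
  imports "HOL-Analysis.Analysis"
begin

text \<open>A 2m deck-shuffler IET with lengths a 0, ..., a (m-1) of A_1..A_m and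
  b 0, ..., b (m-1) of B_1..B_m (indices shifted to start at 0).\<close>

definition ds_A :: "(nat \<Rightarrow> real) \<Rightarrow> nat \<Rightarrow> real set" where
  "ds_A a i = {(\<Sum>j<i. a j) ..< (\<Sum>j\<le>i. a j)}"

definition ds_B :: "nat \<Rightarrow> (nat \<Rightarrow> real) \<Rightarrow> (nat \<Rightarrow> real) \<Rightarrow> nat \<Rightarrow> real set" where
  "ds_B m a b i = {(\<Sum>j<m. a j) + (\<Sum>j<i. b j) ..< (\<Sum>j<m. a j) + (\<Sum>j\<le>i. b j)}"

definition ds_Bunion :: "nat \<Rightarrow> (nat \<Rightarrow> real) \<Rightarrow> (nat \<Rightarrow> real) \<Rightarrow> real set" where
  "ds_Bunion m a b = (\<Union>i<m. ds_B m a b i)"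

text \<open>T x = x + |B_1|+...+|B_i| on A_i, T x = x - |A_i| - ... - |A_m| on B_i
  (the intervals are pairwise disjoint, so at most one summand is nonzero).\<close>
definition ds_T :: "nat \<Rightarrow> (nat \<Rightarrow> real) \<Rightarrow> (nat \<Rightarrow> real) \<Rightarrow> real \<Rightarrow> real" where
  "ds_T m a b x = x + (\<Sum>i<m. indicator (ds_A a i) x * (\<Sum>j\<le>i. b j))
                    - (\<Sum>i<m. indicator (ds_B m a b i) x * (\<Sum>j\<in>{i..<m}. a j))"

definition ds_H :: "nat \<Rightarrow> (nat \<Rightarrow> real) \<Rightarrow> (nat \<Rightarrow> real) \<Rightarrow> real \<Rightarrow> real" where
  "ds_H m a b x = (\<Sum>n. indicator (ds_Bunion m a b) ((ds_T m a b ^^ n) x) / 2 ^ (n + 1))"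

end

(*
  H is non-decreasing: if H x > H y for some x \<le> y, the two orbits stay ordered and on the same
  side while the difference of their H-values doubles at each step, which is impossible.
  Moreover H (T x) = frac (2 H x), so T maps level sets of H into level sets, and within a level
  set every iterate of T either preserves a distance or enlarges it by at least the smallest
  interval length \<delta>.

  A plateau therefore stays at least as wide along the doubling orbit of its value; since only
  finitely many level sets have a given positive width, the value is periodic. On a periodic level
  set T^p is the identity (it maps the level set into itself and cannot expand) and T acts as a
  translation. If the left endpoint of no level set on the orbit were a discontinuity of T, the
  points slightly to the left of the plateau would follow the same itinerary and hence have the
  same H-value. So each plateau lies on the doubling orbit of a plateau whose left endpoint is
  one of the finitely many discontinuities; distinct plateaus have distinct left endpoints.
*)

theory Submission
  imports Defs
begin

definition itinerary_code :: "('a \<Rightarrow> 'a) \<Rightarrow> 'a set \<Rightarrow> 'a \<Rightarrow> real" where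
  "itinerary_code T B x = (\<Sum>n. indicator B ((T ^^ n) x) / 2 ^ (n + 1))"

lemma summable_itinerary_code: "summable (\<lambda>n. indicator B ((T ^^ n) x) / 2 ^ (n + 1) :: real)"
  by (rule summable_comparison_test'[OF sums_summable[OF power_half_series]])
    (simp add: indicator_def power_divide)

lemma itinerary_code_nonneg: "0 \<le> itinerary_code T B x"
  unfolding itinerary_code_def by (intro suminf_nonneg summable_itinerary_code) simp

lemma itinerary_code_le_1: "itinerary_code T B x \<le> 1"
proof -
  have "itinerary_code T B x \<le> (\<Sum>n. (1/2::real) ^ Suc n)"
    unfolding itinerary_code_def
    by (intro suminf_le summable_itinerary_code sums_summable[OF power_half_series])
      (simp add: indicator_def power_divide)
  then show ?thesis using sums_unique[OF power_half_series] by simp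
qed

lemma itinerary_code_step:
  "itinerary_code T B x = indicator B x / 2 + itinerary_code T B (T x) / 2"
proof -
  have "itinerary_code T B x
      = (\<Sum>n. indicator B ((T ^^ Suc n) x) / 2 ^ (Suc n + 1)) + indicator B x / 2"
    unfolding itinerary_code_def by (subst suminf_split_head[OF summable_itinerary_code]) simp
  also have "(\<Sum>n. indicator B ((T ^^ Suc n) x) / 2 ^ (Suc n + 1))
      = (\<Sum>n. indicator B ((T ^^ n) (T x)) / 2 ^ (n + 1)) / (2::real)"
    by (subst suminf_divide[OF summable_itinerary_code, symmetric])
      (simp add: funpow_Suc_right del: funpow.simps)
  finally show ?thesis unfolding itinerary_code_def by simp
qed

lemma itinerary_code_cong:
  "(\<And>n. (T ^^ n) x \<in> B \<longleftrightarrow> (T ^^ n) y \<in> B) \<Longrightarrow> itinerary_code T B x = itinerary_code T B y"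
  unfolding itinerary_code_def indicator_def by simp

text \<open>An expansion by \<delta> of some pair, extended to a pair close to both ends of \<open>Q\<close>, would
  push the image of that pair out of \<open>[Inf Q, Sup Q]\<close>; so \<open>f\<close> is a translation of \<open>Q\<close>,
  and the translation must be trivial.\<close>

lemma self_map_of_bounded_set_eq_id:
  fixes f :: "real \<Rightarrow> real" and Q :: "real set"
  assumes below: "bdd_below Q" and above: "bdd_above Q" and maps: "f ` Q \<subseteq> Q" and "0 < \<delta>"
    and dichotomy: "\<And>u v. u \<in> Q \<Longrightarrow> v \<in> Q \<Longrightarrow> u \<le> v \<Longrightarrow>
        f v - f u = v - u \<or> v - u + \<delta> \<le> f v - f u"
    and "x \<in> Q"
  shows "f x = x"
proof -
  have "Q \<noteq> {}" using \<open>x \<in> Q\<close> by blast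
  have image_bounds: "Inf Q \<le> f v" "f v \<le> Sup Q" if "v \<in> Q" for v
    using maps that cInf_lower[OF _ below] cSup_upper[OF _ above] by blast+
  have isometric: "f v - f u = v - u" if "u \<in> Q" "v \<in> Q" "u \<le> v" for u v
  proof (rule ccontr)
    assume "f v - f u \<noteq> v - u"
    then have expanding: "v - u + \<delta> \<le> f v - f u" using dichotomy that by blast
    obtain u0 where "u0 \<in> Q" "u0 < Inf Q + \<delta>/2"
      using cInf_less_iff[OF \<open>Q \<noteq> {}\<close> below, of "Inf Q + \<delta>/2"] \<open>0 < \<delta>\<close> by auto
    obtain v0 where "v0 \<in> Q" "Sup Q - \<delta>/2 < v0"
      using less_cSup_iff[OF \<open>Q \<noteq> {}\<close> above, of "Sup Q - \<delta>/2"] \<open>0 < \<delta>\<close> by auto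
    define u1 v1 where "u1 = min u0 u" and "v1 = max v0 v"
    have "u1 \<in> Q" "v1 \<in> Q" "u1 \<le> u" "v \<le> v1"
      using \<open>u0 \<in> Q\<close> \<open>v0 \<in> Q\<close> that by (auto simp: u1_def v1_def min_def max_def)
    then have "u - u1 \<le> f u - f u1" "v1 - v \<le> f v1 - f v"
      using dichotomy[of u1 u] dichotomy[of v v1] \<open>u \<in> Q\<close> \<open>v \<in> Q\<close> \<open>0 < \<delta>\<close> by auto
    moreover have "u1 < Inf Q + \<delta>/2" "Sup Q - \<delta>/2 < v1"
      using \<open>u0 < Inf Q + \<delta>/2\<close> \<open>Sup Q - \<delta>/2 < v0\<close> by (auto simp: u1_def v1_def)
    ultimately show False
      using expanding image_bounds[OF \<open>u1 \<in> Q\<close>] image_bounds[OF \<open>v1 \<in> Q\<close>] by linarith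
  qed
  define t where "t = f x - x"
  have shift: "f v = v + t" if "v \<in> Q" for v
    using isometric[OF that \<open>x \<in> Q\<close>] isometric[OF \<open>x \<in> Q\<close> that] unfolding t_def
    by (cases "v \<le> x") auto
  have "\<not> 0 < t"
  proof
    assume "0 < t"
    then obtain v where "v \<in> Q" "Sup Q - t < v"
      using less_cSup_iff[OF \<open>Q \<noteq> {}\<close> above, of "Sup Q - t"] by auto
    then show False using image_bounds(2) shift by fastforce
  qed
  moreover have "\<not> t < 0"
  proof
    assume "t < 0"
    then obtain v where "v \<in> Q" "v < Inf Q - t"
      using cInf_less_iff[OF \<open>Q \<noteq> {}\<close> below, of "Inf Q - t"] by auto
    then show False using image_bounds(1) shift by fastforce
  qed
  ultimately show ?thesis using shift[OF \<open>x \<in> Q\<close>] by simp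
qed

lemma finite_range_funpow_periodic:
  assumes "(f ^^ p) x = x" "0 < p"
  shows "finite (range (\<lambda>n. (f ^^ n) x))"
proof (rule finite_subset)
  show "range (\<lambda>n. (f ^^ n) x) \<subseteq> (\<lambda>n. (f ^^ n) x) ` {..<p}"
    using funpow_mod_eq[OF assms(1)] assms(2) by (auto intro!: image_eqI[of _ _ "_ mod p"])
qed simp

lemma funpow_periodic_orbit:
  assumes "(f ^^ p) x = x"
  shows "(f ^^ p) ((f ^^ k) x) = (f ^^ k) x"
  using assms by (metis add.commute comp_apply funpow_add)

definition doubling :: "real \<Rightarrow> real" where
  "doubling z = frac (2 * z)"

text \<open>An abstraction of the deck shuffler: \<open>E\<close> holds the left endpoints of the intervals
  \<open>A\<^sub>i, B\<^sub>i\<close>, and \<open>\<delta>\<close> is the smallest of their lengths.\<close>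

locale piecewise_translation =
  fixes T :: "real \<Rightarrow> real" and B E :: "real set" and \<delta> :: real
  assumes maps_unit: "x \<in> {0..<1} \<Longrightarrow> T x \<in> {0..<1}"
    and inj: "inj_on T {0..<1}"
    and B_upward: "x \<in> {0..<1} \<Longrightarrow> y \<in> {0..<1} \<Longrightarrow> x \<le> y \<Longrightarrow> x \<in> B \<Longrightarrow> y \<in> B"
    and delta_pos: "0 < \<delta>"
    and B_moves_left: "x \<in> {0..<1} \<Longrightarrow> x \<in> B \<Longrightarrow> T x \<le> x - \<delta>"
    and translation_mono: "x \<in> {0..<1} \<Longrightarrow> y \<in> {0..<1} \<Longrightarrow> x \<le> y \<Longrightarrow> (x \<in> B \<longleftrightarrow> y \<in> B) \<Longrightarrow>
        T x - x = T y - y \<or> T x - x + \<delta> \<le> T y - y"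
    and finite_E: "finite E"
    and piece: "x \<in> {0..<1} \<Longrightarrow> \<exists>e\<in>E. \<exists>e'. e \<le> x \<and> x < e' \<and>
        (\<forall>u\<in>{e..<e'}. u \<in> {0..<1} \<and> (u \<in> B \<longleftrightarrow> x \<in> B) \<and> T u - u = T x - x)"
begin

abbreviation H :: "real \<Rightarrow> real" where
  "H \<equiv> itinerary_code T B"

definition level :: "real \<Rightarrow> real set" where
  "level z = {x \<in> {0..<1}. H x = z}"

definition plateau :: "real \<Rightarrow> bool" where
  "plateau z \<longleftrightarrow> (\<exists>x\<in>level z. \<exists>y\<in>level z. x < y)"

lemma funpow_maps_unit: "x \<in> {0..<1} \<Longrightarrow> (T ^^ n) x \<in> {0..<1}"
  by (induction n) (simp_all add: maps_unit del: atLeastLessThan_iff)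

lemma inj_on_funpow: "inj_on (T ^^ n) {0..<1}"
proof (induction n)
  case (Suc n)
  have "inj_on T ((T ^^ n) ` {0..<1})"
    using inj funpow_maps_unit by (blast intro: inj_on_subset)
  with Suc show ?case using comp_inj_on by (fastforce simp: comp_def)
qed simp

lemma H_lt_1:
  assumes "x \<in> {0..<1}"
  shows "H x < 1"
proof (rule ccontr)
  assume "\<not> H x < 1"
  then have "H x = 1" using itinerary_code_le_1[of T B x] by simp
  have H_eq_1_step: "v \<in> B \<and> H (T v) = 1" if "H v = 1" for v
    using that itinerary_code_step[of T B v] itinerary_code_le_1[of T B "T v"]
    by (cases "v \<in> B") auto
  have orbit_in_B: "(T ^^ n) x \<in> B" for n
  proof -
    have "H ((T ^^ n) x) = 1" by (induction n) (use \<open>H x = 1\<close> H_eq_1_step in auto)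
    then show ?thesis using H_eq_1_step by blast
  qed
  have drift: "(T ^^ n) x \<le> x - real n * \<delta>" for n
  proof (induction n)
    case (Suc n)
    then show ?case
      using B_moves_left[OF funpow_maps_unit[OF assms] orbit_in_B, of n]
      by (simp add: algebra_simps)
  qed simp
  obtain n where "1 < real n * \<delta>" using ex_less_of_nat_mult[OF delta_pos] by blast
  then show False using drift[of n] funpow_maps_unit[OF assms, of n] assms by auto
qed

lemma in_B_iff_H_ge_half:
  assumes "x \<in> {0..<1}"
  shows "x \<in> B \<longleftrightarrow> 1/2 \<le> H x"
  using itinerary_code_step[of T B x] itinerary_code_nonneg[of T B "T x"]
    H_lt_1[OF maps_unit[OF assms]]
  by (auto simp: indicator_def)

lemma H_T_eq_doubling:
  assumes "x \<in> {0..<1}"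
  shows "H (T x) = doubling (H x)"
proof -
  have "2 * H x - H (T x) = indicator B x"
    using itinerary_code_step[of T B x] by simp
  then have "frac (2 * H x) = H (T x)"
    unfolding frac_unique_iff
    using itinerary_code_nonneg[of T B "T x"] H_lt_1[OF maps_unit[OF assms]]
    by (cases "x \<in> B") auto
  then show ?thesis by (simp add: doubling_def)
qed

lemma H_funpow: "x \<in> {0..<1} \<Longrightarrow> H ((T ^^ n) x) = (doubling ^^ n) (H x)"
  by (induction n) (simp_all add: H_T_eq_doubling funpow_maps_unit del: atLeastLessThan_iff)

lemma H_mono:
  assumes "x \<in> {0..<1}" "y \<in> {0..<1}" "x \<le> y"
  shows "H x \<le> H y"
proof (rule ccontr)
  assume "\<not> H x \<le> H y"
  define g where "g = H x - H y"
  have "0 < g" using \<open>\<not> H x \<le> H y\<close> by (simp add: g_def)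
  have orbits: "(T ^^ n) x \<le> (T ^^ n) y \<and> H ((T ^^ n) x) - H ((T ^^ n) y) = 2 ^ n * g" for n
  proof (induction n)
    case 0
    then show ?case using assms by (simp add: g_def)
  next
    case (Suc n)
    define u v where "u = (T ^^ n) x" and "v = (T ^^ n) y"
    have "u \<in> {0..<1}" "v \<in> {0..<1}"
      using funpow_maps_unit assms by (simp_all add: u_def v_def)
    have "u \<le> v" "H u - H v = 2 ^ n * g" using Suc by (simp_all add: u_def v_def)
    moreover have "0 < 2 ^ n * g" using \<open>0 < g\<close> by simp
    ultimately have "H v < H u" by linarith
    then have same_side: "u \<in> B \<longleftrightarrow> v \<in> B"
      using B_upward[OF \<open>u \<in> _\<close> \<open>v \<in> _\<close> \<open>u \<le> v\<close>] in_B_iff_H_ge_half \<open>u \<in> _\<close> \<open>v \<in> _\<close> by force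
    then have "T u \<le> T v"
      using translation_mono[OF \<open>u \<in> _\<close> \<open>v \<in> _\<close> \<open>u \<le> v\<close>] \<open>u \<le> v\<close> delta_pos by auto
    moreover have "H (T u) - H (T v) = 2 * (H u - H v)"
      using itinerary_code_step[of T B u] itinerary_code_step[of T B v] same_side
      by (simp add: indicator_def)
    ultimately show ?case using \<open>H u - H v = 2 ^ n * g\<close> by (simp add: u_def v_def)
  qed
  obtain n where "1 / g < 2 ^ n" using real_arch_pow[of 2 "1 / g"] by auto
  then have "1 < 2 ^ n * g" using \<open>0 < g\<close> by (simp add: field_simps)
  then show False
    using orbits[of n] itinerary_code_le_1[of T B "(T ^^ n) x"]
      itinerary_code_nonneg[of T B "(T ^^ n) y"]
    by linarith
qed

lemma level_subset_unit: "level z \<subseteq> {0..<1}"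
  by (auto simp: level_def)

lemma level_side: "x \<in> level z \<Longrightarrow> x \<in> B \<longleftrightarrow> 1/2 \<le> z"
  by (auto simp: level_def in_B_iff_H_ge_half)

lemma funpow_level: "x \<in> level z \<Longrightarrow> (T ^^ n) x \<in> level ((doubling ^^ n) z)"
  by (simp add: level_def H_funpow funpow_maps_unit del: atLeastLessThan_iff)

lemma level_convex: "x \<in> level z \<Longrightarrow> y \<in> level z \<Longrightarrow> x \<le> u \<Longrightarrow> u \<le> y \<Longrightarrow> u \<in> level z"
  unfolding level_def using H_mono[of x u] H_mono[of u y] by auto

lemma funpow_expansion:
  assumes "u \<in> level z" "v \<in> level z" "u \<le> v"
  shows "(T ^^ n) v - (T ^^ n) u = v - u \<or> v - u + \<delta> \<le> (T ^^ n) v - (T ^^ n) u"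
proof (induction n)
  case (Suc n)
  define u' v' where "u' = (T ^^ n) u" and "v' = (T ^^ n) v"
  have levels: "u' \<in> level ((doubling ^^ n) z)" "v' \<in> level ((doubling ^^ n) z)"
    using funpow_level assms by (simp_all add: u'_def v'_def)
  moreover have "u' \<le> v'" using Suc assms(3) delta_pos by (auto simp: u'_def v'_def)
  ultimately have "T u' - u' = T v' - v' \<or> T u' - u' + \<delta> \<le> T v' - v'"
    using translation_mono level_side level_subset_unit by blast
  then show ?case using Suc delta_pos by (auto simp: u'_def v'_def)
qed simp

lemma funpow_noncontracting:
  "u \<in> level z \<Longrightarrow> v \<in> level z \<Longrightarrow> u \<le> v \<Longrightarrow> v - u \<le> (T ^^ n) v - (T ^^ n) u"
  using funpow_expansion[of u z v n] delta_pos by auto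

lemma periodic_level_fixed:
  assumes "(doubling ^^ p) z = z" "x \<in> level z"
  shows "(T ^^ p) x = x"
proof (rule self_map_of_bounded_set_eq_id[OF _ _ _ delta_pos funpow_expansion])
  show "bdd_below (level z)" "bdd_above (level z)"
    by (auto simp: level_def intro!: bdd_belowI[of _ 0] bdd_aboveI[of _ 1])
  show "(T ^^ p) ` level z \<subseteq> level z" using funpow_level[of _ z p] assms(1) by auto
qed (use assms(2) in auto)

text \<open>A level set is an interval, so if it has width at least \<open>d > 1/N\<close> it contains a point of
  the grid \<open>{0, 1/N, ..., 1}\<close>.\<close>

lemma finite_wide_levels:
  assumes "0 < d"
  shows "finite {z. \<exists>u\<in>level z. \<exists>v\<in>level z. u + d \<le> v}"
proof -
  obtain N :: nat where "1 / d < N" using reals_Archimedean2 by blast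
  moreover have "0 < 1 / d" using assms by simp
  ultimately have "0 < real N" by linarith
  then have "1 / real N < d"
    using \<open>1 / d < N\<close> assms by (simp add: field_simps)
  have "{z. \<exists>u\<in>level z. \<exists>v\<in>level z. u + d \<le> v} \<subseteq> (\<lambda>q. H (of_int q / N)) ` {0..int N}"
  proof
    fix z assume "z \<in> {z. \<exists>u\<in>level z. \<exists>v\<in>level z. u + d \<le> v}"
    then obtain u v where "u \<in> level z" "v \<in> level z" "u + d \<le> v" by blast
    then have "0 \<le> u" "v < 1" by (auto simp: level_def)
    define q where "q = \<lceil>N * u\<rceil>"
    have "N * u \<le> q" "q < N * u + 1"
      using ceiling_correct[of "N * u"] by (simp_all add: q_def)
    then have grid: "u \<le> q / N" "q / N < u + 1 / N"
      using \<open>0 < real N\<close> by (simp_all add: field_simps)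
    then have "q / N \<in> level z"
      using level_convex[OF \<open>u \<in> level z\<close> \<open>v \<in> level z\<close>] \<open>1 / N < d\<close> \<open>u + d \<le> v\<close> by simp
    moreover have "0 \<le> N * u" using \<open>0 \<le> u\<close> by simp
    then have "0 \<le> q" by (simp add: q_def)
    moreover have "q / N < 1" using grid \<open>1 / N < d\<close> \<open>u + d \<le> v\<close> \<open>v < 1\<close> by linarith
    then have "q \<le> N" using \<open>0 < real N\<close> by (simp add: field_simps)
    ultimately show "z \<in> (\<lambda>q. H (of_int q / N)) ` {0..int N}"
      by (auto simp: level_def)
  qed
  then show ?thesis by (rule finite_subset) simp
qed

lemma doubling_periodic_of_repetition:
  assumes "(doubling ^^ (p + i)) z = (doubling ^^ i) z" "x \<in> level z"
  shows "(doubling ^^ p) z = z"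
proof -
  have "(T ^^ p) ((T ^^ i) x) = (T ^^ i) x"
    using periodic_level_fixed funpow_level[OF assms(2)] assms(1) by (metis funpow_add comp_apply)
  then have "(T ^^ i) ((T ^^ p) x) = (T ^^ i) x"
    by (metis add.commute comp_apply funpow_add)
  moreover have "x \<in> {0..<1}" using assms(2) level_subset_unit by blast
  ultimately have "(T ^^ p) x = x"
    using inj_onD[OF inj_on_funpow[of i]] funpow_maps_unit by blast
  then show ?thesis
    using H_funpow[of x p] assms(2) by (auto simp: level_def)
qed

lemma plateau_periodic:
  assumes "plateau z"
  obtains p where "0 < p" "(doubling ^^ p) z = z"
proof -
  obtain x y where "x \<in> level z" "y \<in> level z" "x < y"
    using assms by (auto simp: plateau_def)
  have "(doubling ^^ n) z \<in> {w. \<exists>u\<in>level w. \<exists>v\<in>level w. u + (y - x) \<le> v}" for n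
  proof -
    have "(T ^^ n) x \<in> level ((doubling ^^ n) z)" "(T ^^ n) y \<in> level ((doubling ^^ n) z)"
      using funpow_level \<open>x \<in> level z\<close> \<open>y \<in> level z\<close> by blast+
    moreover have "(T ^^ n) x + (y - x) \<le> (T ^^ n) y"
      using funpow_noncontracting[OF \<open>x \<in> level z\<close> \<open>y \<in> level z\<close>, of n] \<open>x < y\<close> by simp
    ultimately show ?thesis by blast
  qed
  then have "finite (range (\<lambda>n. (doubling ^^ n) z))"
    by (intro finite_subset[OF _ finite_wide_levels]) (use \<open>x < y\<close> in auto)
  then have "\<not> inj (\<lambda>n. (doubling ^^ n) z)"
    using finite_imageD by blast
  then obtain i j where "i < j" "(doubling ^^ i) z = (doubling ^^ j) z"
    unfolding inj_def by (metis linorder_neqE_nat)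
  then have "(doubling ^^ (j - i)) z = z"
    using doubling_periodic_of_repetition[OF _ \<open>x \<in> level z\<close>, of "j - i" i] by simp
  moreover have "0 < j - i" using \<open>i < j\<close> by simp
  ultimately show ?thesis by (rule that[rotated])
qed

lemma periodic_level_translation_eq:
  assumes "(doubling ^^ p) z = z" "0 < p" "u \<in> level z" "v \<in> level z"
  shows "T u - u = T v - v"
proof -
  have ordered: "T u - u = T v - v" if u: "u \<in> level z" and v: "v \<in> level z" and "u \<le> v" for u v
  proof -
    obtain q where "p = Suc q" using \<open>0 < p\<close> gr0_implies_Suc by blast
    have "T u \<in> level (doubling z)" "T v \<in> level (doubling z)"
      using funpow_level[OF u, of 1] funpow_level[OF v, of 1] by simp_all
    have "v - u \<le> T v - T u" using funpow_noncontracting[OF u v \<open>u \<le> v\<close>, of 1] by simp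
    moreover have "T v - T u \<le> (T ^^ q) (T v) - (T ^^ q) (T u)"
      using funpow_noncontracting[OF \<open>T u \<in> _\<close> \<open>T v \<in> _\<close>] \<open>v - u \<le> T v - T u\<close> \<open>u \<le> v\<close>
      by simp
    moreover have "(T ^^ q) (T u) = u" "(T ^^ q) (T v) = v"
      using periodic_level_fixed[OF assms(1)] u v \<open>p = Suc q\<close>
      by (simp_all add: funpow_Suc_right del: funpow.simps)
    moreover have "T u - u = T v - v \<or> T u - u + \<delta> \<le> T v - v"
    proof (rule translation_mono)
      show "u \<in> {0..<1}" "v \<in> {0..<1}" using u v level_subset_unit by blast+
      show "u \<in> B \<longleftrightarrow> v \<in> B" using level_side[OF u] level_side[OF v] by simp
    qed fact
    ultimately show ?thesis using delta_pos by linarith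
  qed
  show ?thesis
  proof (cases "u \<le> v")
    case False
    then show ?thesis using ordered[OF assms(4,3)] by simp
  qed (rule ordered[OF assms(3,4)])
qed

lemma T_image_periodic_level:
  assumes "(doubling ^^ p) z = z" "0 < p"
  shows "T ` level z = level (doubling z)"
proof
  show "T ` level z \<subseteq> level (doubling z)" using funpow_level[of _ z 1] by auto
  show "level (doubling z) \<subseteq> T ` level z"
  proof
    fix w assume "w \<in> level (doubling z)"
    obtain q where "p = Suc q" using \<open>0 < p\<close> gr0_implies_Suc by blast
    have "(doubling ^^ p) (doubling z) = doubling z"
      using assms(1) by (metis funpow_swap1)
    then have "(T ^^ p) w = w"
      using periodic_level_fixed \<open>w \<in> level (doubling z)\<close> by blast
    then have "T ((T ^^ q) w) = w" using \<open>p = Suc q\<close> by simp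
    moreover have "(T ^^ q) w \<in> level z"
      using funpow_level[OF \<open>w \<in> level (doubling z)\<close>, of q] assms(1) \<open>p = Suc q\<close>
      by (simp add: funpow_Suc_right del: funpow.simps)
    ultimately show "w \<in> T ` level z" by (metis image_eqI)
  qed
qed

lemma Inf_level_doubling:
  assumes "(doubling ^^ p) z = z" "0 < p" "v \<in> level z"
  shows "Inf (level (doubling z)) = (T v - v) + Inf (level z)"
proof -
  have "level (doubling z) = T ` level z"
    using T_image_periodic_level[OF assms(1,2)] by simp
  also have "\<dots> = (\<lambda>u. (T v - v) + u) ` level z"
  proof (rule image_cong[OF refl])
    show "T u = (T v - v) + u" if "u \<in> level z" for u
      using periodic_level_translation_eq[OF assms(1,2) that assms(3)] by linarith
  qed
  finally have "level (doubling z) = (\<lambda>u. (T v - v) + u) ` level z" .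
  then have "Inf (level (doubling z)) = (INF u\<in>level z. (T v - v) + u)" by (simp only:)
  also have "\<dots> = (T v - v) + (INF u\<in>level z. u)"
  proof (rule Inf_add_eq)
    show "bdd_below ((\<lambda>u. u) ` level z)" by (auto simp: level_def intro!: bdd_belowI[of _ 0])
  qed (use assms(3) in blast)
  finally show ?thesis by (simp only: image_ident)
qed

lemma plateau_funpow:
  assumes "plateau z"
  shows "plateau ((doubling ^^ n) z)"
proof -
  obtain x y where "x \<in> level z" "y \<in> level z" "x < y"
    using assms unfolding plateau_def by blast
  moreover have "y - x \<le> (T ^^ n) y - (T ^^ n) x"
    using funpow_noncontracting calculation by simp
  ultimately show ?thesis
    unfolding plateau_def using funpow_level by (metis diff_gt_0_iff_gt order_less_le_trans)
qed

definition moves_with_level :: "real \<Rightarrow> real \<Rightarrow> bool" where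
  "moves_with_level z u \<longleftrightarrow> u \<in> {0..<1} \<and> (\<forall>v\<in>level z. (u \<in> B \<longleftrightarrow> v \<in> B) \<and> T u - u = T v - v)"

lemma eventually_moves_with_level_left_of_Inf:
  assumes "(doubling ^^ p) z = z" "0 < p" "level z \<noteq> {}" "Inf (level z) \<notin> E"
  shows "eventually (\<lambda>\<epsilon>. \<forall>u. Inf (level z) - \<epsilon> \<le> u \<and> u < Inf (level z) \<longrightarrow> moves_with_level z u)
    (at_right 0)"
proof -
  define l where "l = Inf (level z)"
  have below: "bdd_below (level z)" by (auto simp: level_def intro!: bdd_belowI[of _ 0])
  obtain v where "v \<in> level z" using assms(3) by blast
  have "0 \<le> l" unfolding l_def by (rule cInf_greatest[OF assms(3)]) (simp add: level_def)
  moreover have "l \<le> v" unfolding l_def by (rule cInf_lower[OF \<open>v \<in> level z\<close> below])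
  ultimately have "l \<in> {0..<1}" using \<open>v \<in> level z\<close> by (auto simp: level_def)
  then obtain e e' where "e \<in> E" "e \<le> l" "l < e'"
    and on_piece: "\<And>u. u \<in> {e..<e'} \<Longrightarrow> u \<in> {0..<1} \<and> (u \<in> B \<longleftrightarrow> l \<in> B) \<and> T u - u = T l - l"
    using piece by blast
  have "e < l" using \<open>e \<in> E\<close> \<open>e \<le> l\<close> assms(4) by (auto simp: l_def order.order_iff_strict)
  obtain w where "w \<in> level z" "w < e'"
    using cInf_less_iff[OF assms(3) below] \<open>l < e'\<close> by (auto simp: l_def)
  moreover have "l \<le> w" unfolding l_def by (rule cInf_lower[OF \<open>w \<in> level z\<close> below])
  ultimately have "w \<in> {e..<e'}" using \<open>e \<le> l\<close> by simp
  have moves: "moves_with_level z u" if "u \<in> {e..<e'}" for u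
    unfolding moves_with_level_def
  proof (intro conjI ballI)
    show "u \<in> {0..<1}" using on_piece[OF that] by blast
    fix v assume "v \<in> level z"
    show "u \<in> B \<longleftrightarrow> v \<in> B"
      using on_piece[OF that] on_piece[OF \<open>w \<in> {e..<e'}\<close>]
        level_side[OF \<open>w \<in> level z\<close>] level_side[OF \<open>v \<in> level z\<close>] by blast
    show "T u - u = T v - v"
      using on_piece[OF that] on_piece[OF \<open>w \<in> {e..<e'}\<close>]
        periodic_level_translation_eq[OF assms(1,2) \<open>w \<in> level z\<close> \<open>v \<in> level z\<close>] by simp
  qed
  have "\<forall>u. l - \<epsilon> \<le> u \<and> u < l \<longrightarrow> moves_with_level z u" if "0 < \<epsilon>" "\<epsilon> < l - e" for \<epsilon>
    using moves that \<open>l < e'\<close> by simp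
  then show ?thesis
    unfolding eventually_at_right_field l_def[symmetric] using \<open>e < l\<close> by (metis diff_gt_0_iff_gt)
qed

lemma uniform_left_neighbourhood_of_Inf_levels:
  assumes "(doubling ^^ p) z = z" "0 < p" "level z \<noteq> {}"
    and not_E: "\<And>k. Inf (level ((doubling ^^ k) z)) \<notin> E"
  obtains \<epsilon> where "0 < \<epsilon>"
    "\<And>k u. Inf (level ((doubling ^^ k) z)) - \<epsilon> \<le> u \<Longrightarrow> u < Inf (level ((doubling ^^ k) z)) \<Longrightarrow>
      moves_with_level ((doubling ^^ k) z) u"
proof -
  define near where "near \<epsilon> w \<longleftrightarrow>
    (\<forall>u. Inf (level w) - \<epsilon> \<le> u \<and> u < Inf (level w) \<longrightarrow> moves_with_level w u)" for \<epsilon> w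
  let ?orbit = "(\<lambda>k. (doubling ^^ k) z) ` {..<p}"
  have "level ((doubling ^^ k) z) \<noteq> {}" for k
    using assms(3) funpow_level by blast
  then have "\<forall>w\<in>?orbit. eventually (\<lambda>\<epsilon>. near \<epsilon> w) (at_right 0)"
    unfolding near_def
    using eventually_moves_with_level_left_of_Inf[OF funpow_periodic_orbit[OF assms(1)] assms(2)
        _ not_E]
    by blast
  then have "eventually (\<lambda>\<epsilon>. \<forall>w\<in>?orbit. near \<epsilon> w) (at_right 0)"
    by (rule eventually_ball_finite[rotated]) simp
  then obtain b where "0 < b" "\<And>\<epsilon>. 0 < \<epsilon> \<Longrightarrow> \<epsilon> < b \<Longrightarrow> \<forall>w\<in>?orbit. near \<epsilon> w"
    unfolding eventually_at_right_field by blast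
  then have "\<forall>w\<in>?orbit. near (b / 2) w" by simp
  moreover have "(doubling ^^ k) z \<in> ?orbit" for k
    using funpow_mod_eq[OF assms(1), of k] assms(2)
    by (metis image_eqI lessThan_iff mod_less_divisor)
  ultimately have "near (b / 2) ((doubling ^^ k) z)" for k by blast
  with \<open>0 < b\<close> show thesis
    using that[of "b / 2"] unfolding near_def by auto
qed

text \<open>Otherwise the point \<open>x'\<close> slightly to the left of the plateau would shadow its orbit of level
  sets, staying just left of their infima, and so share the itinerary of the plateau.\<close>

lemma plateau_Inf_level_in_E:
  assumes "plateau z"
  shows "\<exists>k. Inf (level ((doubling ^^ k) z)) \<in> E"
proof (rule ccontr)
  assume "\<nexists>k. Inf (level ((doubling ^^ k) z)) \<in> E"
  obtain p where "0 < p" "(doubling ^^ p) z = z" using plateau_periodic[OF assms] .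
  obtain x where "x \<in> level z" using assms by (auto simp: plateau_def)
  then obtain \<epsilon> where "0 < \<epsilon>" and near:
    "\<And>k u. Inf (level ((doubling ^^ k) z)) - \<epsilon> \<le> u \<Longrightarrow> u < Inf (level ((doubling ^^ k) z)) \<Longrightarrow>
      moves_with_level ((doubling ^^ k) z) u"
    using uniform_left_neighbourhood_of_Inf_levels[OF \<open>(doubling ^^ p) z = z\<close> \<open>0 < p\<close>]
      \<open>\<nexists>k. _\<close> by blast
  define l where "l k = Inf (level ((doubling ^^ k) z))" for k
  define x' where "x' = l 0 - \<epsilon> / 2"
  have shadow:
    "(T ^^ k) x' = l k - \<epsilon> / 2 \<and> moves_with_level ((doubling ^^ k) z) ((T ^^ k) x')" for k
  proof (induction k)
    case 0
    then show ?case using near[of 0 x'] \<open>0 < \<epsilon>\<close> by (simp add: x'_def l_def)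
  next
    case (Suc k)
    have "(T ^^ k) x \<in> level ((doubling ^^ k) z)" using funpow_level[OF \<open>x \<in> level z\<close>] .
    then have "l (Suc k) = (T ((T ^^ k) x) - (T ^^ k) x) + l k"
      using Inf_level_doubling[OF funpow_periodic_orbit[OF \<open>(doubling ^^ p) z = z\<close>] \<open>0 < p\<close>]
      by (simp add: l_def)
    moreover have "T ((T ^^ k) x') - (T ^^ k) x' = T ((T ^^ k) x) - (T ^^ k) x"
      using Suc \<open>(T ^^ k) x \<in> _\<close> by (auto simp: moves_with_level_def)
    ultimately have "(T ^^ Suc k) x' = l (Suc k) - \<epsilon> / 2" using Suc by simp
    then show ?case using near[of "Suc k" "(T ^^ Suc k) x'"] \<open>0 < \<epsilon>\<close> by (simp add: l_def)
  qed
  have "(T ^^ k) x' \<in> B \<longleftrightarrow> (T ^^ k) x \<in> B" for k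
    using shadow[of k] funpow_level[OF \<open>x \<in> level z\<close>, of k] by (auto simp: moves_with_level_def)
  then have "H x' = H x" by (rule itinerary_code_cong)
  moreover have "x' \<in> {0..<1}" using shadow[of 0] by (simp add: moves_with_level_def)
  ultimately have "x' \<in> level z" using \<open>x \<in> level z\<close> by (simp add: level_def)
  then have "l 0 \<le> x'"
    unfolding l_def by (auto intro!: cInf_lower bdd_belowI[of _ 0] simp: level_def)
  then show False using \<open>0 < \<epsilon>\<close> by (simp add: x'_def)
qed

lemma Inf_level_less:
  assumes "plateau z" "w' \<in> level w" "z < w"
  shows "Inf (level z) < Inf (level w)"
proof -
  obtain x y where "x \<in> level z" "y \<in> level z" "x < y"
    using assms(1) by (auto simp: plateau_def)
  have "y \<le> t" if "t \<in> level w" for t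
  proof (rule ccontr)
    assume "\<not> y \<le> t"
    then have "w \<le> z"
      using H_mono[of t y] that \<open>y \<in> level z\<close> by (auto simp: level_def)
    then show False using \<open>z < w\<close> by simp
  qed
  then have "y \<le> Inf (level w)" using assms(2) by (blast intro: cInf_greatest)
  moreover have "Inf (level z) \<le> x"
    using \<open>x \<in> level z\<close> by (auto intro!: cInf_lower bdd_belowI[of _ 0] simp: level_def)
  ultimately show ?thesis using \<open>x < y\<close> by simp
qed

lemma inj_on_Inf_level: "inj_on (\<lambda>z. Inf (level z)) {z. plateau z}"
proof (rule linorder_inj_onI')
  fix z w assume "z \<in> {z. plateau z}" "w \<in> {z. plateau z}" "z < w"
  then obtain w' where "w' \<in> level w" by (auto simp: plateau_def)
  then show "Inf (level z) \<noteq> Inf (level w)"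
    using Inf_level_less \<open>z \<in> _\<close> \<open>z < w\<close> by (metis mem_Collect_eq order_less_irrefl)
qed

theorem finite_plateaus: "finite {z. plateau z}"
proof -
  define P\<^sub>E where "P\<^sub>E = {z. plateau z \<and> Inf (level z) \<in> E}"
  have "finite P\<^sub>E"
  proof (rule finite_imageD)
    show "finite ((\<lambda>z. Inf (level z)) ` P\<^sub>E)"
      using finite_E by (rule finite_subset[rotated]) (auto simp: P\<^sub>E_def)
    show "inj_on (\<lambda>z. Inf (level z)) P\<^sub>E"
      using inj_on_Inf_level by (rule inj_on_subset) (auto simp: P\<^sub>E_def)
  qed
  moreover have "finite (range (\<lambda>j. (doubling ^^ j) w))" if "w \<in> P\<^sub>E" for w
  proof -
    have "plateau w" using \<open>w \<in> P\<^sub>E\<close> by (simp add: P\<^sub>E_def)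
    then obtain p where "0 < p" "(doubling ^^ p) w = w" by (rule plateau_periodic)
    then show ?thesis by (intro finite_range_funpow_periodic)
  qed
  ultimately have "finite (\<Union>w\<in>P\<^sub>E. range (\<lambda>j. (doubling ^^ j) w))"
    by (rule finite_UN_I)
  moreover have "{z. plateau z} \<subseteq> (\<Union>w\<in>P\<^sub>E. range (\<lambda>j. (doubling ^^ j) w))"
  proof
    fix z assume "z \<in> {z. plateau z}"
    then obtain p where "0 < p" "(doubling ^^ p) z = z" using plateau_periodic by auto
    obtain k where "Inf (level ((doubling ^^ k) z)) \<in> E"
      using plateau_Inf_level_in_E \<open>z \<in> _\<close> by blast
    then have "(doubling ^^ k) z \<in> P\<^sub>E" using plateau_funpow \<open>z \<in> _\<close> by (simp add: P\<^sub>E_def)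
    have "(doubling ^^ (k * p - k)) ((doubling ^^ k) z) = (doubling ^^ (k * p - k + k)) z"
      by (simp add: funpow_add)
    also have "\<dots> = (doubling ^^ (k * p)) z"
      using \<open>0 < p\<close> by simp
    also have "\<dots> = z"
      using funpow_mod_eq[OF \<open>(doubling ^^ p) z = z\<close>, of "k * p"] by simp
    finally have "z \<in> range (\<lambda>j. (doubling ^^ j) ((doubling ^^ k) z))" by (rule range_eqI[OF sym])
    then show "z \<in> (\<Union>w\<in>P\<^sub>E. range (\<lambda>j. (doubling ^^ j) w))"
      using \<open>(doubling ^^ k) z \<in> P\<^sub>E\<close> by blast
  qed
  ultimately show ?thesis by (rule finite_subset[rotated])
qed

end

lemma mono_on_partial_sums:
  fixes f :: "nat \<Rightarrow> real"
  assumes "\<And>i. i < m \<Longrightarrow> 0 \<le> f i"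
  shows "mono_on {..m} (\<lambda>i. c + sum f {..<i})"
  by (rule mono_onI) (auto intro!: sum_mono2 assms)

lemma partition_index_le:
  fixes s :: "nat \<Rightarrow> real"
  assumes "mono_on {..m} s" "i \<le> m" "s i \<le> x" "y < s (Suc k)" "x \<le> y"
  shows "i \<le> k"
proof (rule ccontr)
  assume "\<not> i \<le> k"
  then have "s (Suc k) \<le> s i" using assms(1,2) by (auto intro: mono_onD)
  then show False using assms(3-5) by simp
qed

lemma partition_index_exists:
  fixes s :: "nat \<Rightarrow> real"
  shows "s 0 \<le> x \<Longrightarrow> x < s m \<Longrightarrow> \<exists>i<m. s i \<le> x \<and> x < s (Suc i)"
proof (induction m)
  case (Suc m)
  then show ?case by (cases "x < s m") (auto intro: less_SucI)
qed simp

lemma sum_indicator_partition: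
  fixes s c :: "nat \<Rightarrow> real"
  assumes "mono_on {..m} s" "i < m" "s i \<le> x" "x < s (Suc i)"
  shows "(\<Sum>k<m. indicator {s k..<s (Suc k)} x * c k) = c i"
proof -
  have "x \<in> {s k..<s (Suc k)} \<longleftrightarrow> k = i" if "k < m" for k
  proof
    assume "x \<in> {s k..<s (Suc k)}"
    then have "i \<le> k" "k \<le> i"
      using partition_index_le[OF assms(1), of i x x k] partition_index_le[OF assms(1), of k x x i]
        that assms(2-4) by simp_all
    then show "k = i" by simp
  qed (use assms(3,4) in simp)
  then have "(\<Sum>k<m. indicator {s k..<s (Suc k)} x * c k) = (\<Sum>k<m. if k = i then c k else 0)"
    by (intro sum.cong) (simp_all add: indicator_def)
  then show ?thesis using assms(2) by simp
qed

lemma sum_indicator_outside: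
  fixes s c :: "nat \<Rightarrow> real"
  assumes "mono_on {..m} s" "x < s 0 \<or> s m \<le> x"
  shows "(\<Sum>k<m. indicator {s k..<s (Suc k)} x * c k) = 0"
proof (rule sum.neutral, intro ballI)
  fix k assume "k \<in> {..<m}"
  then have "s 0 \<le> s k" "s (Suc k) \<le> s m" using assms(1) by (auto intro: mono_onD)
  then have "x \<notin> {s k..<s (Suc k)}" using assms(2) by auto
  then show "indicator {s k..<s (Suc k)} x * c k = 0" by simp
qed

lemma ds_A_eq: "ds_A a i = {sum a {..<i}..<sum a {..<Suc i}}"
  by (simp add: ds_A_def lessThan_Suc_atMost)

lemma ds_B_eq: "ds_B m a b i = {sum a {..<m} + sum b {..<i}..<sum a {..<m} + sum b {..<Suc i}}"
  by (simp add: ds_B_def lessThan_Suc_atMost)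

context
  fixes m :: nat and a b :: "nat \<Rightarrow> real"
  assumes a_pos: "\<forall>i<m. 0 < a i" and b_pos: "\<forall>i<m. 0 < b i"
    and total: "sum a {..<m} + sum b {..<m} = 1"
begin

lemma mono_on_A_cuts: "mono_on {..m} (\<lambda>i. sum a {..<i})"
  using mono_on_partial_sums[of m a 0] a_pos by (simp add: less_imp_le)

lemma mono_on_B_cuts: "mono_on {..m} (\<lambda>i. sum a {..<m} + sum b {..<i})"
  using mono_on_partial_sums[of m b] b_pos by (simp add: less_imp_le)

lemma partial_sums_le:
  assumes "i \<le> k" "k \<le> m"
  shows "sum a {..<i} \<le> sum a {..<k}" "sum b {..<i} \<le> sum b {..<k}"
  using mono_onD[OF mono_on_A_cuts, of i k] mono_onD[OF mono_on_B_cuts, of i k] assms by auto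

lemma partial_sums_nonneg: "i \<le> m \<Longrightarrow> 0 \<le> sum a {..<i}" "i \<le> m \<Longrightarrow> 0 \<le> sum b {..<i}"
  using partial_sums_le[of 0 i] by auto

lemma ds_A_subset: "i < m \<Longrightarrow> ds_A a i \<subseteq> {0..<sum a {..<m}}"
  using partial_sums_nonneg(1)[of i] partial_sums_le(1)[of "Suc i" m] by (auto simp: ds_A_eq)

lemma ds_B_subset: "i < m \<Longrightarrow> ds_B m a b i \<subseteq> {sum a {..<m}..<1}"
  using partial_sums_nonneg(2)[of i] partial_sums_le(2)[of "Suc i" m] total by (auto simp: ds_B_eq)

lemma ds_A_exists: "0 \<le> x \<Longrightarrow> x < sum a {..<m} \<Longrightarrow> \<exists>i<m. x \<in> ds_A a i"
  using partition_index_exists[of "\<lambda>i. sum a {..<i}" x m] by (simp add: ds_A_eq)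

lemma ds_B_exists: "sum a {..<m} \<le> x \<Longrightarrow> x < 1 \<Longrightarrow> \<exists>i<m. x \<in> ds_B m a b i"
  using partition_index_exists[of "\<lambda>i. sum a {..<m} + sum b {..<i}" x m] total
  by (simp add: ds_B_eq)

lemma ds_Bunion_eq: "ds_Bunion m a b = {sum a {..<m}..<1}"
proof (intro equalityI subsetI)
  fix x assume "x \<in> ds_Bunion m a b"
  then obtain i where "i < m" "x \<in> ds_B m a b i" by (auto simp: ds_Bunion_def)
  then show "x \<in> {sum a {..<m}..<1}" using ds_B_subset by blast
next
  fix x assume "x \<in> {sum a {..<m}..<1}"
  then obtain i where "i < m" "x \<in> ds_B m a b i" using ds_B_exists by auto
  then show "x \<in> ds_Bunion m a b" by (auto simp: ds_Bunion_def)
qed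

lemma ds_T_on_A:
  assumes "i < m" "x \<in> ds_A a i"
  shows "ds_T m a b x = x + sum b {..<Suc i}"
proof -
  have "(\<Sum>k<m. indicator (ds_A a k) x * (\<Sum>j\<le>k. b j)) = (\<Sum>j\<le>i. b j)"
    unfolding ds_A_eq
    by (rule sum_indicator_partition[OF mono_on_A_cuts assms(1)])
      (use assms(2) in \<open>simp_all add: ds_A_eq\<close>)
  moreover have "(\<Sum>k<m. indicator (ds_B m a b k) x * (\<Sum>j\<in>{k..<m}. a j)) = 0"
    unfolding ds_B_eq
  proof (rule sum_indicator_outside[OF mono_on_B_cuts])
    show "x < sum a {..<m} + sum b {..<0} \<or> sum a {..<m} + sum b {..<m} \<le> x"
      using ds_A_subset[OF assms(1)] assms(2) by auto
  qed
  ultimately show ?thesis by (simp add: ds_T_def lessThan_Suc_atMost)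
qed

lemma ds_T_on_B:
  assumes "i < m" "x \<in> ds_B m a b i"
  shows "ds_T m a b x = x + sum a {..<i} - sum a {..<m}"
proof -
  have "(\<Sum>k<m. indicator (ds_A a k) x * (\<Sum>j\<le>k. b j)) = 0"
    unfolding ds_A_eq
  proof (rule sum_indicator_outside[OF mono_on_A_cuts])
    show "x < sum a {..<0} \<or> sum a {..<m} \<le> x"
      using ds_B_subset[OF assms(1)] assms(2) by auto
  qed
  moreover have "(\<Sum>k<m. indicator (ds_B m a b k) x * (\<Sum>j\<in>{k..<m}. a j)) = (\<Sum>j\<in>{i..<m}. a j)"
    unfolding ds_B_eq
    by (rule sum_indicator_partition[OF mono_on_B_cuts assms(1)])
      (use assms(2) in \<open>simp_all add: ds_B_eq\<close>)
  moreover have "(\<Sum>j\<in>{i..<m}. a j) = sum a {..<m} - sum a {..<i}"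
    using sum_diff_nat_ivl[of 0 i m a] assms(1) by (simp add: atLeast0LessThan)
  ultimately show ?thesis by (simp add: ds_T_def)
qed

lemma deck_piece_cases:
  assumes "x \<in> {0..<1}"
  obtains (A) i where "i < m" "x \<in> ds_A a i" "x \<notin> ds_Bunion m a b"
    | (B) i where "i < m" "x \<in> ds_B m a b i" "x \<in> ds_Bunion m a b"
proof (cases "x < sum a {..<m}")
  case True
  then obtain i where "i < m" "x \<in> ds_A a i" using ds_A_exists[of x] assms by auto
  then show thesis using A True by (simp add: ds_Bunion_eq)
next
  case False
  then obtain i where "i < m" "x \<in> ds_B m a b i" using ds_B_exists[of x] assms by auto
  then show thesis using B False assms by (simp add: ds_Bunion_eq)
qed

lemma ds_T_maps_unit:
  assumes "x \<in> {0..<1}"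
  shows "ds_T m a b x \<in> {0..<1}"
  using assms
proof (cases rule: deck_piece_cases)
  case (A i)
  then show ?thesis
    using ds_T_on_A[OF A(1,2)] partial_sums_nonneg(2)[of "Suc i"] partial_sums_le[of "Suc i" m]
      assms total by (auto simp: ds_A_eq)
next
  case (B i)
  then show ?thesis
    using ds_T_on_B[OF B(1,2)] partial_sums_nonneg[of i] partial_sums_le[of i m]
      partial_sums_le[of "Suc i" m] total by (auto simp: ds_B_eq)
qed

lemma ds_T_images_disjoint:
  assumes "i < m" "x \<in> ds_A a i" "k < m" "y \<in> ds_B m a b k"
  shows "ds_T m a b x \<noteq> ds_T m a b y"
proof (cases "k \<le> i")
  case True
  then have "sum a {..<k} \<le> sum a {..<i}" "sum b {..<Suc k} \<le> sum b {..<Suc i}"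
    using partial_sums_le(1)[of k i] partial_sums_le(2)[of "Suc k" "Suc i"] assms(1)
    by (simp_all del: sum.lessThan_Suc)
  then show ?thesis using ds_T_on_A[OF assms(1,2)] ds_T_on_B[OF assms(3,4)] assms(2,4)
    by (auto simp: ds_A_eq ds_B_eq)
next
  case False
  then have "sum a {..<Suc i} \<le> sum a {..<k}" "sum b {..<Suc i} \<le> sum b {..<k}"
    using partial_sums_le[of "Suc i" k] assms(3) by (simp_all del: sum.lessThan_Suc)
  then show ?thesis using ds_T_on_A[OF assms(1,2)] ds_T_on_B[OF assms(3,4)] assms(2,4)
    by (auto simp: ds_A_eq ds_B_eq)
qed

lemma ds_pieces:
  assumes "x \<in> {0..<1}"
  shows "\<exists>e\<in>(\<lambda>i. sum a {..<i}) ` {..<m} \<union> (\<lambda>i. sum a {..<m} + sum b {..<i}) ` {..<m}.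
    \<exists>e'. e \<le> x \<and> x < e' \<and> (\<forall>u\<in>{e..<e'}. u \<in> {0..<1} \<and>
      (u \<in> ds_Bunion m a b \<longleftrightarrow> x \<in> ds_Bunion m a b) \<and> ds_T m a b u - u = ds_T m a b x - x)"
  using assms
proof (cases rule: deck_piece_cases)
  case (A i)
  show ?thesis
  proof (intro bexI[of _ "sum a {..<i}"] exI[of _ "sum a {..<Suc i}"] conjI ballI)
    show "sum a {..<i} \<le> x" "x < sum a {..<Suc i}" using A(2) unfolding ds_A_eq by simp_all
    fix u assume "u \<in> {sum a {..<i}..<sum a {..<Suc i}}"
    then have "u \<in> ds_A a i" unfolding ds_A_eq .
    then show "u \<in> {0..<1}" "u \<in> ds_Bunion m a b \<longleftrightarrow> x \<in> ds_Bunion m a b"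
      "ds_T m a b u - u = ds_T m a b x - x"
      using ds_A_subset[OF A(1)] ds_T_on_A[OF A(1)] A(2,3) total partial_sums_nonneg(2)[of m]
      by (auto simp: ds_Bunion_eq)
  qed (use A(1) in simp)
next
  case (B i)
  show ?thesis
  proof (intro bexI[of _ "sum a {..<m} + sum b {..<i}"] exI[of _ "sum a {..<m} + sum b {..<Suc i}"]
      conjI ballI)
    show "sum a {..<m} + sum b {..<i} \<le> x" "x < sum a {..<m} + sum b {..<Suc i}"
      using B(2) unfolding ds_B_eq by simp_all
    fix u assume "u \<in> {sum a {..<m} + sum b {..<i}..<sum a {..<m} + sum b {..<Suc i}}"
    then have "u \<in> ds_B m a b i" unfolding ds_B_eq .
    then show "u \<in> {0..<1}" "u \<in> ds_Bunion m a b \<longleftrightarrow> x \<in> ds_Bunion m a b"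
      "ds_T m a b u - u = ds_T m a b x - x"
      using ds_B_subset[OF B(1)] ds_T_on_B[OF B(1)] B(2,3) partial_sums_nonneg(1)[of m]
      by (auto simp: ds_Bunion_eq)
  qed (use B(1) in simp)
qed

context
  fixes \<delta> :: real
  assumes delta_pos: "0 < \<delta>" and delta_le: "\<forall>i<m. \<delta> \<le> a i \<and> \<delta> \<le> b i"
begin

lemma ds_translation_mono:
  assumes "x \<in> {0..<1}" "y \<in> {0..<1}" "x \<le> y"
    and same_side: "x \<in> ds_Bunion m a b \<longleftrightarrow> y \<in> ds_Bunion m a b"
  shows "ds_T m a b x - x = ds_T m a b y - y \<or> ds_T m a b x - x + \<delta> \<le> ds_T m a b y - y"
  using assms(1)
proof (cases rule: deck_piece_cases)
  case (A i)
  obtain k where "k < m" "y \<in> ds_A a k"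
    using deck_piece_cases[OF assms(2)] same_side A(3) by metis
  then have "i \<le> k"
    using partition_index_le[OF mono_on_A_cuts, of i x y k] A(1,2) assms(3) by (simp add: ds_A_eq)
  moreover have "sum b {..<Suc i} + \<delta> \<le> sum b {..<Suc k}" if "i < k"
    using partial_sums_le(2)[of "Suc i" k] that \<open>k < m\<close> delta_le[rule_format, OF \<open>k < m\<close>] by simp
  ultimately show ?thesis
    using ds_T_on_A[OF A(1,2)] ds_T_on_A[OF \<open>k < m\<close> \<open>y \<in> ds_A a k\<close>] by force
next
  case (B i)
  obtain k where "k < m" "y \<in> ds_B m a b k"
    using deck_piece_cases[OF assms(2)] same_side B(3) by metis
  then have "i \<le> k"
    using partition_index_le[OF mono_on_B_cuts, of i x y k] B(1,2) assms(3) by (simp add: ds_B_eq)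
  moreover have "sum a {..<i} + \<delta> \<le> sum a {..<k}" if "i < k"
    using partial_sums_le(1)[of "Suc i" k] that \<open>k < m\<close> delta_le[rule_format, OF B(1)] by simp
  ultimately show ?thesis
    using ds_T_on_B[OF B(1,2)] ds_T_on_B[OF \<open>k < m\<close> \<open>y \<in> ds_B m a b k\<close>] by force
qed

lemma ds_T_inj: "inj_on (ds_T m a b) {0..<1}"
proof (rule linorder_inj_onI')
  fix x y :: real assume x: "x \<in> {0..<1}" and y: "y \<in> {0..<1}" and "x < y"
  show "ds_T m a b x \<noteq> ds_T m a b y"
  proof (cases "x \<in> ds_Bunion m a b \<longleftrightarrow> y \<in> ds_Bunion m a b")
    case True
    then show ?thesis using ds_translation_mono[OF x y _ True] \<open>x < y\<close> delta_pos by force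
  next
    case False
    then have "x \<notin> ds_Bunion m a b" "y \<in> ds_Bunion m a b"
      using \<open>x < y\<close> x y by (auto simp: ds_Bunion_eq)
    then show ?thesis
      using deck_piece_cases[OF x] deck_piece_cases[OF y] ds_T_images_disjoint by metis
  qed
qed

lemma ds_B_moves_left:
  assumes "x \<in> {0..<1}" "x \<in> ds_Bunion m a b"
  shows "ds_T m a b x \<le> x - \<delta>"
  using assms(1)
proof (cases rule: deck_piece_cases)
  case (B i)
  then show ?thesis
    using ds_T_on_B[OF B(1,2)] partial_sums_le(1)[of "Suc i" m] delta_le[rule_format, OF B(1)]
    by simp
qed (use assms(2) in simp)

lemma deck_shuffler_piecewise_translation:
  "piecewise_translation (ds_T m a b) (ds_Bunion m a b)
     ((\<lambda>i. sum a {..<i}) ` {..<m} \<union> (\<lambda>i. sum a {..<m} + sum b {..<i}) ` {..<m}) \<delta>"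
proof
  show "ds_T m a b x \<in> {0..<1}" if "x \<in> {0..<1}" for x
    using that by (rule ds_T_maps_unit)
  show "inj_on (ds_T m a b) {0..<1}" by (rule ds_T_inj)
  show "y \<in> ds_Bunion m a b"
    if "x \<in> {0..<1}" "y \<in> {0..<1}" "x \<le> y" "x \<in> ds_Bunion m a b" for x y
    using that by (simp add: ds_Bunion_eq)
  show "0 < \<delta>" by (rule delta_pos)
  show "ds_T m a b x \<le> x - \<delta>" if "x \<in> {0..<1}" "x \<in> ds_Bunion m a b" for x
    using that by (rule ds_B_moves_left)
  show "ds_T m a b x - x = ds_T m a b y - y \<or> ds_T m a b x - x + \<delta> \<le> ds_T m a b y - y"
    if "x \<in> {0..<1}" "y \<in> {0..<1}" "x \<le> y" "x \<in> ds_Bunion m a b \<longleftrightarrow> y \<in> ds_Bunion m a b" for x y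
    using that by (rule ds_translation_mono)
  show "finite ((\<lambda>i. sum a {..<i}) ` {..<m} \<union> (\<lambda>i. sum a {..<m} + sum b {..<i}) ` {..<m})"
    by simp
qed (rule ds_pieces)

end

end

theorem corollary4:
  fixes m :: nat and a b :: "nat \<Rightarrow> real"
  assumes "m \<ge> 1"
    and "\<forall>i<m. a i > 0" and "\<forall>i<m. b i > 0"
    and "(\<Sum>i<m. a i) + (\<Sum>i<m. b i) = 1"
  shows "mono_on {0..<1} (ds_H m a b)
     \<and> finite {z \<in> {0..<1::real}.
          is_interval ({x \<in> {0..<1}. ds_H m a b x = z})
          \<and> (\<exists>x y. x \<in> {0..<1} \<and> y \<in> {0..<1} \<and> x < y
                   \<and> ds_H m a b x = z \<and> ds_H m a b y = z)}"
proof -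
  define \<delta> where "\<delta> = Min (insert 1 (a ` {..<m} \<union> b ` {..<m}))"
  have "0 < \<delta>" "\<forall>i<m. \<delta> \<le> a i \<and> \<delta> \<le> b i"
    using assms(2,3) by (auto simp: \<delta>_def)
  then interpret piecewise_translation "ds_T m a b" "ds_Bunion m a b"
    "(\<lambda>i. sum a {..<i}) ` {..<m} \<union> (\<lambda>i. sum a {..<m} + sum b {..<i}) ` {..<m}" \<delta>
    by (rule deck_shuffler_piecewise_translation[OF assms(2-4)])
  have H: "ds_H m a b = itinerary_code (ds_T m a b) (ds_Bunion m a b)"
    by (simp add: fun_eq_iff ds_H_def itinerary_code_def)
  have "{z \<in> {0..<1}. is_interval ({x \<in> {0..<1}. ds_H m a b x = z})
          \<and> (\<exists>x y. x \<in> {0..<1} \<and> y \<in> {0..<1} \<and> x < y \<and> ds_H m a b x = z \<and> ds_H m a b y = z)}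
      \<subseteq> {z. plateau z}"
    unfolding H by (auto simp: plateau_def level_def)
  then show ?thesis
    using finite_subset[OF _ finite_plateaus] H_mono by (auto simp: H intro: mono_onI)
qed

end
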